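(* Let $-\omega$ be the automorphism of $\mathcal A_\theta^{alg}$ with $U_1\mapsto U_2$, $U_2\mapsto\lambda^{-1/2}U_1^{-1}U_2$, generating a group $\mathbb Z_6$, and let $H^0(\mathcal A_\theta^{alg},{}_{-\omega}\mathcal A_\theta^{alg\ast})$ be the space of formal series $\varphi=\sum\varphi_{n,m}U_1^nU_2^m$ with $((-\omega)\cdot a)\varphi=\varphi a$ for all $a\in\mathcal A_\theta^{alg}$, with $\mathbb Z_6$ acting termwise. Then $H^0(\mathcal A_\theta^{alg},{}_{-\omega}\mathcal A_\theta^{alg\ast})^{\mathbb Z_6}\cong\mathbb C$.
   Context: Let $\theta\in\mathbb R\setminus\mathbb Q$, $\lambda=e^{2\pi i\theta}$, $\lambda^s:=e^{2\pi i\theta s}$. $\mathcal A_\theta^{alg}$ is the complex algebra of finite sums $\sum a_{n,m}U_1^nU_2^m$ with $U_1,U_2$ invertible and $U_2U_1=\lambda U_1U_2$; formal series $\sum_{(n,m)\in\mathbb Z^2}\varphi_{n,m}U_1^nU_2^m$ with arbitrary coefficients form an $\mathcal A_\theta^{alg}$-bimodule via multiplication. Termwise action of an automorphism $h$: $h\cdot\sum\varphi_{n,m}U_1^nU_2^m=\sum\varphi_{n,m}\,h\cdot(U_1^nU_2^m)$. *)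

theory Defs
  imports Complex_Main
begin

(* Elements of A_theta^alg: finitely supported coefficient functions  a :: int*int => complex,
   a = sum a(n,m) U1^n U2^m.  Formal series: arbitrary  phi :: int*int => complex. *)

definition lam :: "real \<Rightarrow> real \<Rightarrow> complex" where
  "lam \<theta> s = cis (2 * pi * \<theta> * s)"   (* lambda^s = e^{2 pi i theta s} *)

definition fin_supp :: "(int \<times> int \<Rightarrow> complex) \<Rightarrow> bool" where
  "fin_supp a \<longleftrightarrow> finite {k. a k \<noteq> 0}"

(* left module action a*phi, using U1^n U2^m U1^r U2^s = lambda^{m r} U1^{n+r} U2^{m+s} *)
definition lmul :: "real \<Rightarrow> (int \<times> int \<Rightarrow> complex) \<Rightarrow> (int \<times> int \<Rightarrow> complex) \<Rightarrow> (int \<times> int \<Rightarrow> complex)" where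
  "lmul \<theta> a \<phi> = (\<lambda>(p,q). \<Sum>(n,m)\<in>{k. a k \<noteq> 0}.
       a (n,m) * lam \<theta> (of_int (m * (p - n))) * \<phi> (p - n, q - m))"

(* right module action phi*a, using U1^r U2^s U1^n U2^m = lambda^{s n} U1^{r+n} U2^{s+m} *)
definition rmul :: "real \<Rightarrow> (int \<times> int \<Rightarrow> complex) \<Rightarrow> (int \<times> int \<Rightarrow> complex) \<Rightarrow> (int \<times> int \<Rightarrow> complex)" where
  "rmul \<theta> \<phi> a = (\<lambda>(p,q). \<Sum>(n,m)\<in>{k. a k \<noteq> 0}.
       a (n,m) * lam \<theta> (of_int ((q - m) * n)) * \<phi> (p - n, q - m))"

(* The automorphism -omega: U1 |-> U2, U2 |-> lambda^{-1/2} U1^{-1} U2.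
   On monomials: (-omega)(U1^n U2^m) = U2^n (lambda^{-1/2} U1^{-1} U2)^m
                = lambda^{-m^2/2 - n m} U1^{-m} U2^{n+m}.
   Applied termwise to coefficient functions (used both for the automorphism on
   A_theta^alg and for its termwise action on formal series): the coefficient at
   (p,q) comes from the monomial (n,m) = (q+p, -p). *)
definition momega_coef :: "real \<Rightarrow> int \<Rightarrow> int \<Rightarrow> complex" where
  "momega_coef \<theta> n m = lam \<theta> (- ((real_of_int m) ^ 2) / 2 - real_of_int (n * m))"

definition momega :: "real \<Rightarrow> (int \<times> int \<Rightarrow> complex) \<Rightarrow> (int \<times> int \<Rightarrow> complex)" where
  "momega \<theta> f = (\<lambda>(p,q). momega_coef \<theta> (q + p) (- p) * f (q + p, - p))"

definition H0_twisted :: "real \<Rightarrow> (int \<times> int \<Rightarrow> complex) set" where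
  "H0_twisted \<theta> = {\<phi>. \<forall>a. fin_supp a \<longrightarrow> lmul \<theta> (momega \<theta> a) \<phi> = rmul \<theta> \<phi> a}"

definition H0_twisted_inv :: "real \<Rightarrow> (int \<times> int \<Rightarrow> complex) set" where
  "H0_twisted_inv \<theta> = {\<phi> \<in> H0_twisted \<theta>. \<forall>k::nat. (momega \<theta> ^^ k) \<phi> = \<phi>}"

end

theory Submission
  imports Defs
begin

text \<open>
  Testing the twisted trace condition on single monomials U1^n U2^m shows that every
  coefficient \<open>\<phi>(u,v)\<close> is a nonzero multiple, independent of \<open>\<phi>\<close>, of \<open>\<phi>(0,0)\<close>; so
  the twisted 0-cocycles form at most a line. The Gaussian series
  \<open>\<Sum> \<lambda>^(-(u^2+v^2)/2) U1^u U2^v\<close> satisfies all the monomial conditions and is fixed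
  termwise by \<open>-\<omega>\<close>, hence spans the invariants.
\<close>

definition gaussian_series :: "real \<Rightarrow> int \<times> int \<Rightarrow> complex" where
  "gaussian_series \<theta> = (\<lambda>(u,v). lam \<theta> (- (real_of_int u ^ 2 + real_of_int v ^ 2) / 2))"

lemma lam_add: "lam \<theta> a * lam \<theta> b = lam \<theta> (a + b)"
  unfolding lam_def by (simp add: cis_mult algebra_simps)

lemma lam_zero [simp]: "lam \<theta> 0 = 1"
  unfolding lam_def by simp

lemma lam_nonzero [simp]: "lam \<theta> a \<noteq> 0"
  unfolding lam_def by simp

lemma momega_coef_nonzero [simp]: "momega_coef \<theta> n m \<noteq> 0"
  unfolding momega_coef_def by simp

lemma gaussian_series_nonzero [simp]: "gaussian_series \<theta> k \<noteq> 0"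
  by (cases k) (simp add: gaussian_series_def)

lemma support_momega:
  "{k. momega \<theta> a k \<noteq> 0} = (\<lambda>(n,m). (-m, n+m)) ` {k. a k \<noteq> 0}"
proof (intro set_eqI iffI)
  fix k assume "k \<in> {k. momega \<theta> a k \<noteq> 0}"
  then obtain p q where "k = (p,q)" and "a (q+p, -p) \<noteq> 0"
    by (cases k) (auto simp: momega_def)
  then show "k \<in> (\<lambda>(n,m). (-m, n+m)) ` {k. a k \<noteq> 0}"
    by (auto intro!: image_eqI[where x="(q+p,-p)"])
qed (auto simp: momega_def)

lemma lmul_momega:
  "lmul \<theta> (momega \<theta> a) \<phi> (p,q) = (\<Sum>(n,m)\<in>{k. a k \<noteq> 0}.
     a (n,m) * (momega_coef \<theta> n m * lam \<theta> (of_int ((n+m)*(p+m))) * \<phi> (p+m, q-n-m)))"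
proof -
  have "inj_on (\<lambda>(n,m). (-m, n+m::int)) A" for A
    by (auto simp: inj_on_def)
  then show ?thesis
    unfolding lmul_def support_momega
    by (subst sum.reindex) (auto simp: momega_def algebra_simps intro!: sum.cong)
qed

lemma rmul_eq:
  "rmul \<theta> \<phi> a (p,q) = (\<Sum>(n,m)\<in>{k. a k \<noteq> 0}.
     a (n,m) * (lam \<theta> (of_int ((q-m)*n)) * \<phi> (p-n, q-m)))"
  unfolding rmul_def by (simp add: split_def mult.assoc)

definition monomial_twisted_condition :: "real \<Rightarrow> (int \<times> int \<Rightarrow> complex) \<Rightarrow> bool" where
  "monomial_twisted_condition \<theta> \<phi> \<longleftrightarrow> (\<forall>n m p q.
     momega_coef \<theta> n m * lam \<theta> (of_int ((n+m)*(p+m))) * \<phi> (p+m, q-n-m)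
       = lam \<theta> (of_int ((q-m)*n)) * \<phi> (p-n, q-m))"

lemma H0_twisted_iff_monomial_twisted_condition:
  "\<phi> \<in> H0_twisted \<theta> \<longleftrightarrow> monomial_twisted_condition \<theta> \<phi>"
proof
  assume H0: "\<phi> \<in> H0_twisted \<theta>"
  show "monomial_twisted_condition \<theta> \<phi>"
    unfolding monomial_twisted_condition_def
  proof (intro allI)
    fix n m p q :: int
    define a :: "int \<times> int \<Rightarrow> complex" where "a = (\<lambda>k. if k = (n,m) then 1 else 0)"
    have support: "{k. a k \<noteq> 0} = {(n,m)}"
      unfolding a_def by auto
    then have "fin_supp a"
      unfolding fin_supp_def by simp
    then have "lmul \<theta> (momega \<theta> a) \<phi> (p,q) = rmul \<theta> \<phi> a (p,q)"
      using H0 unfolding H0_twisted_def by auto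
    then show "momega_coef \<theta> n m * lam \<theta> (of_int ((n+m)*(p+m))) * \<phi> (p+m, q-n-m)
       = lam \<theta> (of_int ((q-m)*n)) * \<phi> (p-n, q-m)"
      unfolding lmul_momega rmul_eq support by (simp add: a_def)
  qed
next
  assume "monomial_twisted_condition \<theta> \<phi>"
  then show "\<phi> \<in> H0_twisted \<theta>"
    unfolding H0_twisted_def monomial_twisted_condition_def
    by (auto intro!: ext sum.cong simp: lmul_momega rmul_eq split: prod.splits)
qed

lemma gaussian_series_in_H0_twisted: "gaussian_series \<theta> \<in> H0_twisted \<theta>"
  unfolding H0_twisted_iff_monomial_twisted_condition monomial_twisted_condition_def
    gaussian_series_def momega_coef_def prod.case lam_add
  by (intro allI arg_cong[where f="lam \<theta>"])
     (simp add: algebra_simps power2_eq_square divide_simps)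

lemma H0_twisted_scaleC:
  assumes "\<phi> \<in> H0_twisted \<theta>"
  shows "(\<lambda>k. c * \<phi> k) \<in> H0_twisted \<theta>"
  using assms unfolding H0_twisted_iff_monomial_twisted_condition monomial_twisted_condition_def
  by (metis mult.left_commute mult.assoc)

lemma H0_twisted_eq_multiple_gaussian_series:
  assumes "\<phi> \<in> H0_twisted \<theta>"
  shows "\<phi> = (\<lambda>k. \<phi> (0,0) * gaussian_series \<theta> k)"
proof
  fix k :: "int \<times> int"
  obtain u v where k: "k = (u,v)" by (cases k)
  \<comment> \<open>the monomial condition at \<open>(n,m) = (p,q) = (-v, u+v)\<close> links \<open>\<phi>(u,v)\<close> to \<open>\<phi>(0,0)\<close>\<close>
  define K where "K = momega_coef \<theta> (-v) (u+v) * lam \<theta> (of_int (u*u))"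
  have link: "K * \<psi> (u,v) = \<psi> (0,0)" if "\<psi> \<in> H0_twisted \<theta>" for \<psi>
    using that[unfolded H0_twisted_iff_monomial_twisted_condition monomial_twisted_condition_def,
        rule_format, of "-v" "u+v" "-v" "u+v"]
    by (simp add: K_def)
  have "K * gaussian_series \<theta> (u,v) = 1"
    using link[OF gaussian_series_in_H0_twisted] by (simp add: gaussian_series_def)
  then have "K * \<phi> (u,v) = K * (\<phi> (0,0) * gaussian_series \<theta> (u,v))"
    using link[OF assms] by (metis mult.left_commute mult.right_neutral)
  then show "\<phi> k = \<phi> (0,0) * gaussian_series \<theta> k"
    using k by (simp add: K_def)
qed

lemma momega_multiple_gaussian_series:
  "momega \<theta> (\<lambda>k. c * gaussian_series \<theta> k) = (\<lambda>k. c * gaussian_series \<theta> k)"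
proof
  fix k :: "int \<times> int"
  obtain p q where k: "k = (p,q)" by (cases k)
  have "momega_coef \<theta> (q + p) (- p) * gaussian_series \<theta> (q+p, -p) = gaussian_series \<theta> (p,q)"
    unfolding momega_coef_def gaussian_series_def prod.case lam_add
    by (rule arg_cong[where f="lam \<theta>"]) (simp add: algebra_simps power2_eq_square divide_simps)
  then show "momega \<theta> (\<lambda>k. c * gaussian_series \<theta> k) k = c * gaussian_series \<theta> k"
    unfolding momega_def k by (simp add: algebra_simps)
qed

lemma funpow_momega_multiple_gaussian_series:
  "(momega \<theta> ^^ j) (\<lambda>k. c * gaussian_series \<theta> k) = (\<lambda>k. c * gaussian_series \<theta> k)"
  by (induction j) (simp_all add: momega_multiple_gaussian_series)

theorem mainTheorem9:
  fixes \<theta> :: real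
  assumes "\<theta> \<notin> \<rat>"
  shows "\<exists>\<psi>. \<psi> \<noteq> (\<lambda>_. 0) \<and> H0_twisted_inv \<theta> = range (\<lambda>c::complex. \<lambda>k. c * \<psi> k)"
proof (intro exI conjI)
  show "gaussian_series \<theta> \<noteq> (\<lambda>_. 0)"
    by (metis gaussian_series_nonzero)
  show "H0_twisted_inv \<theta> = range (\<lambda>c. \<lambda>k. c * gaussian_series \<theta> k)"
  proof (intro set_eqI iffI)
    fix \<phi> assume "\<phi> \<in> H0_twisted_inv \<theta>"
    then have "\<phi> = (\<lambda>k. \<phi> (0,0) * gaussian_series \<theta> k)"
      unfolding H0_twisted_inv_def by (simp add: H0_twisted_eq_multiple_gaussian_series)
    then show "\<phi> \<in> range (\<lambda>c. \<lambda>k. c * gaussian_series \<theta> k)"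
      by blast
  next
    fix \<phi> assume "\<phi> \<in> range (\<lambda>c. \<lambda>k. c * gaussian_series \<theta> k)"
    then show "\<phi> \<in> H0_twisted_inv \<theta>"
      unfolding H0_twisted_inv_def
      using H0_twisted_scaleC[OF gaussian_series_in_H0_twisted]
        funpow_momega_multiple_gaussian_series by auto
  qed
qed

end
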